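(* Let $\mathrm{Alt}[x,y,z]$ be the free alternative algebra over a field on three free generators $x,y,z$. Then its Veronese $2$-subalgebra $V^{(2)}(\mathrm{Alt}[x,y,z])$ is not free in the variety $\mathrm{Alt}_3$.
   Context: An algebra is alternative if it satisfies $(x,x,y)=(y,x,x)=0$, where $(a,b,c)=(ab)c-a(bc)$. $\mathrm{Alt}_3$ is the subvariety of the variety of alternative algebras generated by the free alternative algebra of rank $3$. The Veronese $2$-subalgebra $V^{(2)}(\mathrm{Alt}[x,y,z])$ is the span of all monomials in $x,y,z$ of even length. An algebra is free in $\mathrm{Alt}_3$ if it is isomorphic to a free algebra of the variety $\mathrm{Alt}_3$ on some set of generators. *)

theory Defs
  imports Main "HOL-Library.Poly_Mapping"
begin

datatype 'v nmon = NVar 'v | NMul "'v nmon" "'v nmon"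

fun nmon_deg :: "'v nmon \<Rightarrow> nat" where
  "nmon_deg (NVar v) = 1"
| "nmon_deg (NMul a b) = nmon_deg a + nmon_deg b"

fun nmon_vars :: "'v nmon \<Rightarrow> 'v set" where
  "nmon_vars (NVar v) = {v}"
| "nmon_vars (NMul a b) = nmon_vars a \<union> nmon_vars b"

text \<open>Elements of the free nonassociative algebra K{V}: finite K-linear combinations of monomials.\<close>
type_synonym ('k, 'v) npoly = "'v nmon \<Rightarrow>\<^sub>0 'k"

definition npvar :: "'v \<Rightarrow> ('k::field, 'v) npoly" where
  "npvar v = Poly_Mapping.single (NVar v) 1"

definition npsmult :: "'k::field \<Rightarrow> ('k, 'v) npoly \<Rightarrow> ('k, 'v) npoly" where
  "npsmult c p = Poly_Mapping.map (\<lambda>a. c * a) p"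

definition npmult :: "('k::field, 'v) npoly \<Rightarrow> ('k, 'v) npoly \<Rightarrow> ('k, 'v) npoly" where
  "npmult p q = (\<Sum>(a, b) \<in> Poly_Mapping.keys p \<times> Poly_Mapping.keys q.
      Poly_Mapping.single (NMul a b) (Poly_Mapping.lookup p a * Poly_Mapping.lookup q b))"

definition npassoc :: "('k::field, 'v) npoly \<Rightarrow> ('k, 'v) npoly \<Rightarrow> ('k, 'v) npoly \<Rightarrow> ('k, 'v) npoly" where
  "npassoc a b c = npmult (npmult a b) c - npmult a (npmult b c)"

definition npvars :: "('k::field, 'v) npoly \<Rightarrow> 'v set" where
  "npvars p = (\<Union>m \<in> Poly_Mapping.keys p. nmon_vars m)"

fun nmon_eval :: "('v \<Rightarrow> ('k::field, 'w) npoly) \<Rightarrow> 'v nmon \<Rightarrow> ('k, 'w) npoly" where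
  "nmon_eval s (NVar v) = s v"
| "nmon_eval s (NMul a b) = npmult (nmon_eval s a) (nmon_eval s b)"

definition npeval :: "('v \<Rightarrow> ('k::field, 'w) npoly) \<Rightarrow> ('k, 'v) npoly \<Rightarrow> ('k, 'w) npoly" where
  "npeval s p = (\<Sum>m \<in> Poly_Mapping.keys p. npsmult (Poly_Mapping.lookup p m) (nmon_eval s m))"

text \<open>The two-sided ideal of K{V} generated by all associators (a,a,b) and (b,a,a).
  The quotient K{V}/alt_ideal is the free alternative algebra Alt[V].\<close>
inductive_set alt_ideal :: "('k::field, 'v) npoly set" where
  left_alt: "npassoc a a b \<in> alt_ideal"
| right_alt: "npassoc b a a \<in> alt_ideal"
| zero: "0 \<in> alt_ideal"
| add: "p \<in> alt_ideal \<Longrightarrow> q \<in> alt_ideal \<Longrightarrow> p + q \<in> alt_ideal"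
| smult: "p \<in> alt_ideal \<Longrightarrow> npsmult c p \<in> alt_ideal"
| mult_right: "p \<in> alt_ideal \<Longrightarrow> npmult p r \<in> alt_ideal"
| mult_left: "p \<in> alt_ideal \<Longrightarrow> npmult r p \<in> alt_ideal"

datatype var3 = X | Y | Z

text \<open>Veronese 2-subalgebra of Alt[x,y,z], represented as the set of representatives in K{x,y,z}
  of elements of Alt[x,y,z] lying in the span of the (images of) monomials of even length.\<close>
definition veronese2 :: "('k::field, var3) npoly set" where
  "veronese2 = {p. \<exists>q. p - q \<in> alt_ideal \<and> (\<forall>m \<in> Poly_Mapping.keys q. even (nmon_deg m))}"

text \<open>Identities of the variety Alt_3 (generated by Alt[x,y,z]): nonassociative polynomials
  vanishing under every substitution of elements of Alt[x,y,z].\<close>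
definition Alt3_identity :: "('k::field, 'w) npoly \<Rightarrow> bool" where
  "Alt3_identity f \<longleftrightarrow> (\<forall>s :: 'w \<Rightarrow> ('k, var3) npoly. npeval s f \<in> alt_ideal)"

text \<open>A subalgebra V of Alt[x,y,z] (given by a set of representatives) is free in Alt_3 iff it
  has a subset X such that X generates V and the canonical homomorphism from the free
  Alt_3-algebra on X, i.e. K{X} modulo the Alt_3 identities, onto V is injective.\<close>
definition free_in_Alt3 :: "('k::field, var3) npoly set \<Rightarrow> bool" where
  "free_in_Alt3 V \<longleftrightarrow>
     (\<exists>G \<subseteq> V.
        (\<forall>p \<in> V. \<exists>f :: ('k, ('k, var3) npoly) npoly.
            npvars f \<subseteq> G \<and> p - npeval (\<lambda>v. v) f \<in> alt_ideal) \<and>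
        (\<forall>f :: ('k, ('k, var3) npoly) npoly.
            npvars f \<subseteq> G \<longrightarrow> npeval (\<lambda>v. v) f \<in> alt_ideal \<longrightarrow> Alt3_identity f))"

end

theory Submission
  imports Defs
begin

(*
  Suppose a set G of elements of V = V^(2)(Alt[x,y,z]) freely generates V in Alt_3, and write
  x^2, xy, y^2 as f1(G), f2(G), f3(G). The associator (x^2, xy, y^2) vanishes in Alt[x,y,z]
  (Artin's theorem; here derived from the Moufang identities), so the associator (f1, f2, f3)
  is an identity of Alt_3.

  Modulo the alternative ideal, the elements of V have no linear terms. Hence substituting for
  each g in G the linear form a x + b y + c z, where a, b, c are the coefficients of g at xx, xy
  and yy, turns f1, f2, f3 into elements with linear parts x, y, z. For the associator (A, B, C)
  of any three elements, the alternating sum over the permutations (u, v, w) of (x, y, z) of the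
  coefficients at (uv)w is the determinant of the linear parts of A, B, C; this functional
  vanishes on the alternative ideal but takes the value 1 on the substituted (f1, f2, f3).
*)

lemma lookup_npsmult [simp]: "Poly_Mapping.lookup (npsmult c p) m = c * Poly_Mapping.lookup p m"
  unfolding npsmult_def by (simp add: map.rep_eq when_def)

lemma lookup_npmult_NVar [simp]: "Poly_Mapping.lookup (npmult p q) (NVar v) = 0"
  unfolding npmult_def by (simp add: lookup_sum lookup_single case_prod_beta)

lemma lookup_npmult_NMul [simp]:
  "Poly_Mapping.lookup (npmult p q) (NMul a b) = Poly_Mapping.lookup p a * Poly_Mapping.lookup q b"
proof -
  have "Poly_Mapping.lookup (npmult p q) (NMul a b) =
     (\<Sum>x\<in>Poly_Mapping.keys p \<times> Poly_Mapping.keys q.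
        if x = (a, b) then Poly_Mapping.lookup p (fst x) * Poly_Mapping.lookup q (snd x) else 0)"
    unfolding npmult_def lookup_sum
    by (rule sum.cong) (simp_all add: lookup_single when_def case_prod_beta prod_eq_iff)
  also have "\<dots> = Poly_Mapping.lookup p a * Poly_Mapping.lookup q b"
    by (subst sum.delta) (auto simp: in_keys_iff)
  finally show ?thesis .
qed

lemma lookup_npmult:
  "Poly_Mapping.lookup (npmult p q) m =
     (case m of NVar v \<Rightarrow> 0 | NMul a b \<Rightarrow> Poly_Mapping.lookup p a * Poly_Mapping.lookup q b)"
  by (cases m) simp_all

lemma keys_npmult:
  "m \<in> Poly_Mapping.keys (npmult p q) \<Longrightarrow>
     \<exists>a b. m = NMul a b \<and> a \<in> Poly_Mapping.keys p \<and> b \<in> Poly_Mapping.keys q"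
  by (cases m) (auto simp: in_keys_iff)

lemma npmult_add_left: "npmult (p + q) r = npmult p r + npmult q r"
  by (rule poly_mapping_eqI) (simp add: lookup_npmult lookup_add distrib_right split: nmon.split)

lemma npmult_add_right: "npmult r (p + q) = npmult r p + npmult r q"
  by (rule poly_mapping_eqI) (simp add: lookup_npmult lookup_add distrib_left split: nmon.split)

lemma npmult_diff_left: "npmult (p - q) r = npmult p r - npmult q r"
  by (rule poly_mapping_eqI)
    (simp add: lookup_npmult lookup_minus left_diff_distrib split: nmon.split)

lemma npmult_diff_right: "npmult r (p - q) = npmult r p - npmult r q"
  by (rule poly_mapping_eqI)
    (simp add: lookup_npmult lookup_minus right_diff_distrib split: nmon.split)

lemma npmult_zero_left [simp]: "npmult 0 r = 0"
  by (rule poly_mapping_eqI) (simp add: lookup_npmult split: nmon.split)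

lemma npmult_zero_right [simp]: "npmult r 0 = 0"
  by (rule poly_mapping_eqI) (simp add: lookup_npmult split: nmon.split)

lemma npmult_npsmult_left: "npmult (npsmult c p) r = npsmult c (npmult p r)"
  by (rule poly_mapping_eqI) (simp add: lookup_npmult split: nmon.split)

lemma npmult_npsmult_right: "npmult r (npsmult c p) = npsmult c (npmult r p)"
  by (rule poly_mapping_eqI) (simp add: lookup_npmult split: nmon.split)

lemmas npmult_distribs = npmult_add_left npmult_add_right npmult_diff_left npmult_diff_right

lemma npmult_sum_left: "npmult (sum f S) r = (\<Sum>x\<in>S. npmult (f x) r)"
  by (induction S rule: infinite_finite_induct) (simp_all add: npmult_add_left)

lemma npmult_sum_right: "npmult r (sum f S) = (\<Sum>x\<in>S. npmult r (f x))"
  by (induction S rule: infinite_finite_induct) (simp_all add: npmult_add_right)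

lemma npsmult_zero_left [simp]: "npsmult 0 p = 0"
  by (rule poly_mapping_eqI) simp

lemma npsmult_add_left: "npsmult (a + b) p = npsmult a p + npsmult b p"
  by (rule poly_mapping_eqI) (simp add: lookup_add algebra_simps)

lemma npsmult_diff_left: "npsmult (a - b) p = npsmult a p - npsmult b p"
  by (rule poly_mapping_eqI) (simp add: lookup_minus algebra_simps)

lemma npsmult_npsmult: "npsmult a (npsmult b p) = npsmult (a * b) p"
  by (rule poly_mapping_eqI) simp

lemma npsmult_minus_one: "npsmult (-1) p = - p"
  by (rule poly_mapping_eqI) simp

lemma npeval_superset:
  assumes "finite S" "Poly_Mapping.keys p \<subseteq> S"
  shows "npeval s p = (\<Sum>m\<in>S. npsmult (Poly_Mapping.lookup p m) (nmon_eval s m))"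
  unfolding npeval_def
  by (rule sum.mono_neutral_left) (use assms in \<open>auto simp: in_keys_iff\<close>)

lemma npeval_add: "npeval s (p + q) = npeval s p + npeval s q"
proof -
  let ?S = "Poly_Mapping.keys p \<union> Poly_Mapping.keys q"
  have "Poly_Mapping.keys (p + q) \<subseteq> ?S" by (rule keys_add)
  then show ?thesis
    using npeval_superset[of ?S "p + q" s] npeval_superset[of ?S p s] npeval_superset[of ?S q s]
    by (simp add: lookup_add npsmult_add_left sum.distrib)
qed

lemma npeval_diff: "npeval s (p - q) = npeval s p - npeval s q"
proof -
  let ?S = "Poly_Mapping.keys p \<union> Poly_Mapping.keys q"
  have "Poly_Mapping.keys (p - q) \<subseteq> ?S" by (auto simp: in_keys_iff lookup_minus)
  then show ?thesis
    using npeval_superset[of ?S "p - q" s] npeval_superset[of ?S p s] npeval_superset[of ?S q s]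
    by (simp add: lookup_minus npsmult_diff_left sum_subtractf)
qed

lemma npeval_zero [simp]: "npeval s 0 = 0"
  by (simp add: npeval_def)

lemma npeval_sum: "npeval s (sum f S) = (\<Sum>x\<in>S. npeval s (f x))"
  by (induction S rule: infinite_finite_induct) (simp_all add: npeval_add)

lemma npeval_single: "npeval s (Poly_Mapping.single m c) = npsmult c (nmon_eval s m)"
  by (subst npeval_superset[of "{m}"]) (auto simp: lookup_single)

lemma npeval_npmult: "npeval s (npmult p q) = npmult (npeval s p) (npeval s q)"
proof -
  have "npeval s (npmult p q) =
    (\<Sum>(a, b)\<in>Poly_Mapping.keys p \<times> Poly_Mapping.keys q.
       npsmult (Poly_Mapping.lookup p a * Poly_Mapping.lookup q b)
         (npmult (nmon_eval s a) (nmon_eval s b)))"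
    unfolding npmult_def[of p q] npeval_sum by (simp add: npeval_single case_prod_beta)
  also have "\<dots> = (\<Sum>a\<in>Poly_Mapping.keys p. \<Sum>b\<in>Poly_Mapping.keys q.
       npsmult (Poly_Mapping.lookup p a * Poly_Mapping.lookup q b)
         (npmult (nmon_eval s a) (nmon_eval s b)))"
    by (simp add: sum.cartesian_product)
  also have "\<dots> = npmult (npeval s p) (npeval s q)"
    unfolding npeval_def npmult_sum_left npmult_sum_right
    by (simp add: npmult_npsmult_left npmult_npsmult_right npsmult_npsmult mult.commute
        sum.swap[of _ "Poly_Mapping.keys q"])
  finally show ?thesis .
qed

lemma npeval_npassoc:
  "npeval s (npassoc a b c) = npassoc (npeval s a) (npeval s b) (npeval s c)"
  by (simp add: npassoc_def npeval_diff npeval_npmult)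

lemma npvars_npmult: "npvars (npmult p q) \<subseteq> npvars p \<union> npvars q"
proof
  fix x assume "x \<in> npvars (npmult p q)"
  then obtain m where m: "m \<in> Poly_Mapping.keys (npmult p q)" "x \<in> nmon_vars m"
    unfolding npvars_def by blast
  then obtain a b where "m = NMul a b" "a \<in> Poly_Mapping.keys p" "b \<in> Poly_Mapping.keys q"
    using keys_npmult by blast
  with m(2) show "x \<in> npvars p \<union> npvars q" unfolding npvars_def by auto
qed

lemma npvars_diff: "npvars (p - q) \<subseteq> npvars p \<union> npvars q"
proof -
  have "Poly_Mapping.keys (p - q) \<subseteq> Poly_Mapping.keys p \<union> Poly_Mapping.keys q"
    by (auto simp: in_keys_iff lookup_minus)
  then show ?thesis unfolding npvars_def by blast
qed

lemma npvars_npassoc: "npvars (npassoc a b c) \<subseteq> npvars a \<union> npvars b \<union> npvars c"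
  unfolding npassoc_def
  using npvars_diff[of "npmult (npmult a b) c" "npmult a (npmult b c)"]
    npvars_npmult[of "npmult a b" c] npvars_npmult[of a b]
    npvars_npmult[of a "npmult b c"] npvars_npmult[of b c]
  by blast

section \<open>Identities of alternative algebras\<close>

lemma alt_ideal_uminus: "p \<in> alt_ideal \<Longrightarrow> - p \<in> alt_ideal"
  by (metis alt_ideal.smult npsmult_minus_one)

lemma alt_ideal_diff: "p \<in> alt_ideal \<Longrightarrow> q \<in> alt_ideal \<Longrightarrow> p - q \<in> alt_ideal"
  by (metis alt_ideal.add alt_ideal_uminus diff_conv_add_uminus)

lemma alt_ideal_sum_list: "list_all (\<lambda>g. g \<in> alt_ideal) gs \<Longrightarrow> sum_list gs \<in> alt_ideal"
  by (induction gs) (auto intro: alt_ideal.zero alt_ideal.add)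

lemma alt_ideal_by_combination:
  assumes "p = sum_list gs - sum_list hs"
    and "list_all (\<lambda>g. g \<in> alt_ideal) gs" "list_all (\<lambda>h. h \<in> alt_ideal) hs"
  shows "p \<in> alt_ideal"
  using assms by (simp add: alt_ideal_diff alt_ideal_sum_list)

lemma npmult_alt_ideal_cong:
  assumes "a - a' \<in> alt_ideal" "b - b' \<in> alt_ideal"
  shows "npmult a b - npmult a' b' \<in> alt_ideal"
proof -
  have "npmult a b - npmult a' b' = npmult (a - a') b + npmult a' (b - b')"
    by (simp add: npmult_distribs)
  then show ?thesis
    using assms by (simp add: alt_ideal.add alt_ideal.mult_left alt_ideal.mult_right)
qed

lemma npassoc_alt_ideal_cong:
  assumes "a - a' \<in> alt_ideal" "b - b' \<in> alt_ideal" "c - c' \<in> alt_ideal"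
  shows "npassoc a b c - npassoc a' b' c' \<in> alt_ideal"
proof -
  have "npassoc a b c - npassoc a' b' c' =
      (npmult (npmult a b) c - npmult (npmult a' b') c')
      - (npmult a (npmult b c) - npmult a' (npmult b' c'))"
    by (simp add: npassoc_def)
  then show ?thesis
    using assms by (simp add: alt_ideal_diff npmult_alt_ideal_cong)
qed

lemma npassoc_swap12_alt_ideal: "npassoc a b c + npassoc b a c \<in> alt_ideal"
proof -
  have "npassoc a b c + npassoc b a c = npassoc (a + b) (a + b) c - npassoc a a c - npassoc b b c"
    by (simp add: npassoc_def npmult_distribs algebra_simps)
  then show ?thesis by (simp add: alt_ideal_diff alt_ideal.left_alt)
qed

lemma npassoc_swap23_alt_ideal: "npassoc a b c + npassoc a c b \<in> alt_ideal"
proof -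
  have "npassoc a b c + npassoc a c b = npassoc a (b + c) (b + c) - npassoc a b b - npassoc a c c"
    by (simp add: npassoc_def npmult_distribs algebra_simps)
  then show ?thesis by (simp add: alt_ideal_diff alt_ideal.right_alt)
qed

lemma npassoc_swap13_alt_ideal: "npassoc a b c + npassoc c b a \<in> alt_ideal"
  by (rule alt_ideal_by_combination[where
        gs = "[npassoc a b c + npassoc b a c, npassoc b c a + npassoc c b a]" and
        hs = "[npassoc b a c + npassoc b c a]"])
    (simp_all add: npassoc_swap12_alt_ideal npassoc_swap23_alt_ideal)

lemma npassoc_cycle_alt_ideal: "npassoc a b c - npassoc b c a \<in> alt_ideal"
  by (rule alt_ideal_by_combination[where
        gs = "[npassoc a b c + npassoc b a c]" and hs = "[npassoc b a c + npassoc b c a]"])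
    (simp_all add: npassoc_swap12_alt_ideal npassoc_swap23_alt_ideal)

lemma npassoc_flexible_alt_ideal: "npassoc a b a \<in> alt_ideal"
  by (rule alt_ideal_by_combination[where
        gs = "[npassoc a b a + npassoc b a a]" and hs = "[npassoc b a a]"])
    (simp_all add: npassoc_swap12_alt_ideal alt_ideal.right_alt)

lemmas npassoc_alternating_alt_ideal = npassoc_swap12_alt_ideal npassoc_swap23_alt_ideal
  npassoc_swap13_alt_ideal npassoc_cycle_alt_ideal npassoc_flexible_alt_ideal
  alt_ideal.left_alt alt_ideal.right_alt

lemma moufang_alt_ideal: "npassoc x y (npmult x z) - npmult (npassoc x y z) x \<in> alt_ideal"
  by (rule alt_ideal_by_combination[where
        gs = "[npassoc x y (npmult x z) + npassoc x (npmult x z) y,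
               npassoc x z (npmult x y) + npassoc z x (npmult x y),
               npassoc x (npmult y z) x,
               npassoc (npmult z x) x y - npassoc x y (npmult z x),
               npmult x (npassoc y z x + npassoc x z y),
               npmult (npassoc x x z) y]" and
        hs = "[npassoc (npmult x y) z x + npassoc x z (npmult x y),
               npassoc (npmult x x) z y + npassoc z (npmult x x) y,
               npmult z (npassoc x x y),
               npmult (npassoc z x x) y,
               npassoc x x (npmult z y)]"])
    (simp add: npassoc_def npmult_distribs algebra_simps,
     simp_all add: alt_ideal.mult_left alt_ideal.mult_right npassoc_alternating_alt_ideal)

lemma moufang_middle_alt_ideal: "npassoc x (npmult x w) z - npmult (npassoc x w z) x \<in> alt_ideal"
  by (rule alt_ideal_by_combination[where
        gs = "[npassoc x (npmult x w) z + npassoc x z (npmult x w)]" and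
        hs = "[npassoc x z (npmult x w) - npmult (npassoc x z w) x,
               npmult (npassoc x z w + npassoc x w z) x]"])
    (simp add: npmult_distribs,
     simp_all add: alt_ideal.mult_right npassoc_swap23_alt_ideal moufang_alt_ideal)

lemma moufang_right_alt_ideal: "npassoc x y (npmult y z) - npmult (npassoc x y z) y \<in> alt_ideal"
  by (rule alt_ideal_by_combination[where
        gs = "[npassoc x y (npmult y z) + npassoc y x (npmult y z)]" and
        hs = "[npassoc y x (npmult y z) - npmult (npassoc y x z) y,
               npmult (npassoc y x z + npassoc x y z) y]"])
    (simp add: npmult_distribs,
     simp_all add: alt_ideal.mult_right npassoc_swap12_alt_ideal moufang_alt_ideal)

lemma artin_alt_ideal: "npassoc (npmult x x) (npmult x y) (npmult y y) \<in> alt_ideal"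
proof -
  have xy_yy: "npassoc x (npmult x y) (npmult y y) \<in> alt_ideal"
    by (rule alt_ideal_by_combination[where
          gs = "[npassoc x (npmult x y) (npmult y y) - npmult (npassoc x y (npmult y y)) x,
                 npmult (npassoc x y (npmult y y) - npmult (npassoc x y y) y) x,
                 npmult (npmult (npassoc x y y) y) x]" and hs = "[]"])
      (simp add: npmult_distribs,
       simp_all add: alt_ideal.mult_right alt_ideal.right_alt moufang_middle_alt_ideal
         moufang_right_alt_ideal)
  have x_xy_yy: "npassoc x (npmult x (npmult x y)) (npmult y y) \<in> alt_ideal"
    by (rule alt_ideal_by_combination[where
          gs = "[npassoc x (npmult x (npmult x y)) (npmult y y)
                   - npmult (npassoc x (npmult x y) (npmult y y)) x,
                 npmult (npassoc x (npmult x y) (npmult y y)) x]" and hs = "[]"])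
      (simp_all add: alt_ideal.mult_right moufang_middle_alt_ideal xy_yy)
  \<comment> \<open>Teichmueller's identity for the factors x, x, xy, yy\<close>
  show ?thesis
    by (rule alt_ideal_by_combination[where
          gs = "[npassoc x (npmult x (npmult x y)) (npmult y y),
                 npmult x (npassoc x (npmult x y) (npmult y y)),
                 npmult (npassoc x x (npmult x y)) (npmult y y)]" and
          hs = "[npassoc x x (npmult (npmult x y) (npmult y y))]"])
      (simp add: npassoc_def npmult_distribs algebra_simps,
       simp_all add: alt_ideal.mult_left alt_ideal.mult_right alt_ideal.left_alt xy_yy x_xy_yy)
qed

section \<open>Low-degree coefficients\<close>

definition lin_coeff :: "('k::field, 'v) npoly \<Rightarrow> 'v \<Rightarrow> 'k" where
  "lin_coeff p u = Poly_Mapping.lookup p (NVar u)"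

definition quad_coeff :: "('k::field, 'v) npoly \<Rightarrow> 'v \<Rightarrow> 'v \<Rightarrow> 'k" where
  "quad_coeff p u v = Poly_Mapping.lookup p (NMul (NVar u) (NVar v))"

definition cub_coeff :: "('k::field, 'v) npoly \<Rightarrow> 'v \<Rightarrow> 'v \<Rightarrow> 'v \<Rightarrow> 'k" where
  "cub_coeff p u v w = Poly_Mapping.lookup p (NMul (NMul (NVar u) (NVar v)) (NVar w))"

definition skew_cub_coeff :: "('k::field, 'v) npoly \<Rightarrow> 'v \<Rightarrow> 'v \<Rightarrow> 'v \<Rightarrow> 'k" where
  "skew_cub_coeff p u v w =
     cub_coeff p u v w - cub_coeff p v u w - cub_coeff p u w v
   + cub_coeff p v w u + cub_coeff p w u v - cub_coeff p w v u"

lemma lin_coeff_npmult [simp]: "lin_coeff (npmult p q) u = 0"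
  by (simp add: lin_coeff_def)

lemma quad_coeff_npmult [simp]: "quad_coeff (npmult p q) u v = lin_coeff p u * lin_coeff q v"
  by (simp add: quad_coeff_def lin_coeff_def)

lemma cub_coeff_npmult [simp]: "cub_coeff (npmult p q) u v w = quad_coeff p u v * lin_coeff q w"
  by (simp add: cub_coeff_def quad_coeff_def lin_coeff_def)

lemma lin_coeff_add [simp]: "lin_coeff (p + q) u = lin_coeff p u + lin_coeff q u"
  by (simp add: lin_coeff_def lookup_add)

lemma quad_coeff_add [simp]: "quad_coeff (p + q) u v = quad_coeff p u v + quad_coeff q u v"
  by (simp add: quad_coeff_def lookup_add)

lemma cub_coeff_add [simp]: "cub_coeff (p + q) u v w = cub_coeff p u v w + cub_coeff q u v w"
  by (simp add: cub_coeff_def lookup_add)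

lemma lin_coeff_diff [simp]: "lin_coeff (p - q) u = lin_coeff p u - lin_coeff q u"
  by (simp add: lin_coeff_def lookup_minus)

lemma quad_coeff_diff [simp]: "quad_coeff (p - q) u v = quad_coeff p u v - quad_coeff q u v"
  by (simp add: quad_coeff_def lookup_minus)

lemma cub_coeff_diff [simp]: "cub_coeff (p - q) u v w = cub_coeff p u v w - cub_coeff q u v w"
  by (simp add: cub_coeff_def lookup_minus)

lemma lin_coeff_npsmult [simp]: "lin_coeff (npsmult c p) u = c * lin_coeff p u"
  by (simp add: lin_coeff_def)

lemma quad_coeff_npsmult [simp]: "quad_coeff (npsmult c p) u v = c * quad_coeff p u v"
  by (simp add: quad_coeff_def)

lemma skew_cub_coeff_add [simp]:
  "skew_cub_coeff (p + q) u v w = skew_cub_coeff p u v w + skew_cub_coeff q u v w"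
  by (simp add: skew_cub_coeff_def)

lemma skew_cub_coeff_npsmult [simp]: "skew_cub_coeff (npsmult c p) u v w = c * skew_cub_coeff p u v w"
  by (simp add: skew_cub_coeff_def cub_coeff_def algebra_simps)

lemma lin_coeff_npvar: "lin_coeff (npvar a :: ('k::field, 'v) npoly) u = (if a = u then 1 else 0)"
  by (simp add: lin_coeff_def npvar_def lookup_single when_def)

lemma lin_coeff_npassoc [simp]: "lin_coeff (npassoc a b c) u = 0"
  by (simp add: npassoc_def)

lemma quad_coeff_npassoc [simp]: "quad_coeff (npassoc a b c) u v = 0"
  by (simp add: npassoc_def)

lemma skew_cub_coeff_npassoc:
  "skew_cub_coeff (npassoc a b c) u v w =
     lin_coeff a u * lin_coeff b v * lin_coeff c w - lin_coeff a v * lin_coeff b u * lin_coeff c w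
   - lin_coeff a u * lin_coeff b w * lin_coeff c v + lin_coeff a v * lin_coeff b w * lin_coeff c u
   + lin_coeff a w * lin_coeff b u * lin_coeff c v - lin_coeff a w * lin_coeff b v * lin_coeff c u"
  by (simp add: skew_cub_coeff_def npassoc_def)

lemma alt_ideal_low_degree_coeffs:
  assumes "p \<in> alt_ideal"
  shows "(\<forall>u. lin_coeff p u = 0) \<and> (\<forall>u v. quad_coeff p u v = 0) \<and>
    (\<forall>u v w. skew_cub_coeff p u v w = 0)"
  using assms
proof (induction rule: alt_ideal.induct)
  case (left_alt a b)
  then show ?case by (simp add: skew_cub_coeff_npassoc algebra_simps)
next
  case (right_alt b a)
  then show ?case by (simp add: skew_cub_coeff_npassoc algebra_simps)
next
  case zero
  then show ?case by (simp add: lin_coeff_def quad_coeff_def skew_cub_coeff_def cub_coeff_def)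
next
  case (add p q)
  then show ?case by simp
next
  case (smult p c)
  then show ?case by simp
next
  case (mult_right p r)
  then show ?case by (simp add: skew_cub_coeff_def)
next
  case (mult_left p r)
  then show ?case by (simp add: skew_cub_coeff_def)
qed

lemma lin_coeff_alt_ideal: "p \<in> alt_ideal \<Longrightarrow> lin_coeff p u = 0"
  using alt_ideal_low_degree_coeffs by blast

lemma quad_coeff_alt_ideal: "p \<in> alt_ideal \<Longrightarrow> quad_coeff p u v = 0"
  using alt_ideal_low_degree_coeffs by blast

lemma skew_cub_coeff_alt_ideal: "p \<in> alt_ideal \<Longrightarrow> skew_cub_coeff p u v w = 0"
  using alt_ideal_low_degree_coeffs by blast

lemma lin_coeff_npeval:
  "lin_coeff (npeval s f) u =
     (\<Sum>m\<in>Poly_Mapping.keys f. Poly_Mapping.lookup f m * lin_coeff (nmon_eval s m) u)"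
  by (simp add: npeval_def lin_coeff_def lookup_sum)

lemma quad_coeff_npeval:
  "quad_coeff (npeval s f) a b =
     (\<Sum>m\<in>Poly_Mapping.keys f. Poly_Mapping.lookup f m * quad_coeff (nmon_eval s m) a b)"
  by (simp add: npeval_def quad_coeff_def lookup_sum)

lemma lin_coeff_npeval_eq_quad_coeff:
  assumes "\<forall>g\<in>npvars f. lin_coeff (s g) u = quad_coeff (t g) a b"
    and "\<forall>g\<in>npvars f. \<forall>c. lin_coeff (t g) c = 0"
  shows "lin_coeff (npeval s f) u = quad_coeff (npeval t f) a b"
  unfolding lin_coeff_npeval quad_coeff_npeval
proof (intro sum.cong refl)
  fix m assume "m \<in> Poly_Mapping.keys f"
  then have vars: "nmon_vars m \<subseteq> npvars f" unfolding npvars_def by blast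
  have no_lin: "lin_coeff (nmon_eval t m') c = 0" if "nmon_vars m' \<subseteq> npvars f" for m' c
    using that assms(2) by (cases m') auto
  show "Poly_Mapping.lookup f m * lin_coeff (nmon_eval s m) u =
        Poly_Mapping.lookup f m * quad_coeff (nmon_eval t m) a b"
    using vars assms(1) by (cases m) (auto simp: no_lin)
qed

lemma lin_coeff_veronese2:
  assumes "p \<in> veronese2"
  shows "lin_coeff p u = 0"
proof -
  obtain q where q: "p - q \<in> alt_ideal" "\<forall>m \<in> Poly_Mapping.keys q. even (nmon_deg m)"
    using assms unfolding veronese2_def by blast
  have "NVar u \<notin> Poly_Mapping.keys q"
    using q(2) by fastforce
  then have "lin_coeff q u = 0"
    by (simp add: lin_coeff_def in_keys_iff)
  with lin_coeff_alt_ideal[OF q(1)] show ?thesis by simp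
qed

lemma npmult_npvar_veronese2:
  "npmult (npvar a) (npvar b) \<in> (veronese2 :: ('k::field, var3) npoly set)"
  unfolding veronese2_def
proof (intro CollectI exI conjI)
  show "npmult (npvar a) (npvar b) - npmult (npvar a) (npvar b) \<in> (alt_ideal :: ('k, var3) npoly set)"
    by (simp add: alt_ideal.zero)
  show "\<forall>m\<in>Poly_Mapping.keys (npmult (npvar a) (npvar b) :: ('k, var3) npoly). even (nmon_deg m)"
    by (auto dest!: keys_npmult simp: npvar_def)
qed

definition quad_to_lin :: "('k::field, var3) npoly \<Rightarrow> ('k, var3) npoly" where
  "quad_to_lin g = npsmult (quad_coeff g X X) (npvar X) + npsmult (quad_coeff g X Y) (npvar Y)
     + npsmult (quad_coeff g Y Y) (npvar Z)"

lemma lin_coeff_npeval_quad_to_lin: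
  assumes "npvars f \<subseteq> veronese2"
  shows "lin_coeff (npeval quad_to_lin f) X = quad_coeff (npeval (\<lambda>v. v) f) X X"
    and "lin_coeff (npeval quad_to_lin f) Y = quad_coeff (npeval (\<lambda>v. v) f) X Y"
    and "lin_coeff (npeval quad_to_lin f) Z = quad_coeff (npeval (\<lambda>v. v) f) Y Y"
  by (rule lin_coeff_npeval_eq_quad_coeff;
      use assms lin_coeff_veronese2 in \<open>force simp: quad_to_lin_def lin_coeff_npvar\<close>)+

lemma npassoc_not_Alt3_identity:
  fixes f1 f2 f3 :: "('k::field, ('k, var3) npoly) npoly"
  assumes "npvars f1 \<subseteq> veronese2" "npvars f2 \<subseteq> veronese2" "npvars f3 \<subseteq> veronese2"
    and "npmult (npvar X) (npvar X) - npeval (\<lambda>v. v) f1 \<in> alt_ideal"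
    and "npmult (npvar X) (npvar Y) - npeval (\<lambda>v. v) f2 \<in> alt_ideal"
    and "npmult (npvar Y) (npvar Y) - npeval (\<lambda>v. v) f3 \<in> alt_ideal"
  shows "\<not> Alt3_identity (npassoc f1 f2 f3)"
proof
  let ?s = "npeval quad_to_lin"
  have "quad_coeff (npeval (\<lambda>v. v) f1) a b = lin_coeff (npvar X) a * lin_coeff (npvar X) b"
    and "quad_coeff (npeval (\<lambda>v. v) f2) a b = lin_coeff (npvar X) a * lin_coeff (npvar Y) b"
    and "quad_coeff (npeval (\<lambda>v. v) f3) a b = lin_coeff (npvar Y) a * lin_coeff (npvar Y) b" for a b
    using quad_coeff_alt_ideal[OF assms(4)] quad_coeff_alt_ideal[OF assms(5)]
      quad_coeff_alt_ideal[OF assms(6)] by auto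
  then have "lin_coeff (?s f1) u = lin_coeff (npvar X) u"
    and "lin_coeff (?s f2) u = lin_coeff (npvar Y) u"
    and "lin_coeff (?s f3) u = lin_coeff (npvar Z) u" for u
    using lin_coeff_npeval_quad_to_lin[OF assms(1)] lin_coeff_npeval_quad_to_lin[OF assms(2)]
      lin_coeff_npeval_quad_to_lin[OF assms(3)]
    by (cases u; simp add: lin_coeff_npvar)+
  then have "skew_cub_coeff (npassoc (?s f1) (?s f2) (?s f3)) X Y Z = 1"
    by (simp add: skew_cub_coeff_npassoc lin_coeff_npvar)
  moreover assume "Alt3_identity (npassoc f1 f2 f3)"
  then have "npassoc (?s f1) (?s f2) (?s f3) \<in> alt_ideal"
    unfolding Alt3_identity_def npeval_npassoc by blast
  ultimately show False
    using skew_cub_coeff_alt_ideal by fastforce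
qed

theorem proposition2:
  shows "\<not> free_in_Alt3 (veronese2 :: ('k::field, var3) npoly set)"
proof
  assume "free_in_Alt3 (veronese2 :: ('k::field, var3) npoly set)"
  then obtain G :: "('k, var3) npoly set" where
    G: "G \<subseteq> veronese2" and
    generates: "\<forall>p \<in> veronese2. \<exists>f :: ('k, ('k, var3) npoly) npoly.
      npvars f \<subseteq> G \<and> p - npeval (\<lambda>v. v) f \<in> alt_ideal" and
    free: "\<forall>f :: ('k, ('k, var3) npoly) npoly.
      npvars f \<subseteq> G \<longrightarrow> npeval (\<lambda>v. v) f \<in> alt_ideal \<longrightarrow> Alt3_identity f"
    unfolding free_in_Alt3_def by blast
  obtain f1 where
    f1: "npvars f1 \<subseteq> G" "npmult (npvar X) (npvar X) - npeval (\<lambda>v. v) f1 \<in> alt_ideal"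
    using generates npmult_npvar_veronese2 by blast
  obtain f2 where
    f2: "npvars f2 \<subseteq> G" "npmult (npvar X) (npvar Y) - npeval (\<lambda>v. v) f2 \<in> alt_ideal"
    using generates npmult_npvar_veronese2 by blast
  obtain f3 where
    f3: "npvars f3 \<subseteq> G" "npmult (npvar Y) (npvar Y) - npeval (\<lambda>v. v) f3 \<in> alt_ideal"
    using generates npmult_npvar_veronese2 by blast
  let ?artin =
    "npassoc (npmult (npvar X) (npvar X)) (npmult (npvar X) (npvar Y)) (npmult (npvar Y) (npvar Y))"
  have "?artin - npeval (\<lambda>v. v) (npassoc f1 f2 f3) \<in> alt_ideal"
    unfolding npeval_npassoc using f1(2) f2(2) f3(2) by (rule npassoc_alt_ideal_cong)
  with artin_alt_ideal have "?artin - (?artin - npeval (\<lambda>v. v) (npassoc f1 f2 f3)) \<in> alt_ideal"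
    by (rule alt_ideal_diff)
  then have "npeval (\<lambda>v. v) (npassoc f1 f2 f3) \<in> alt_ideal"
    by (simp only: diff_diff_eq2 add_diff_cancel_left')
  moreover have "npvars (npassoc f1 f2 f3) \<subseteq> G"
    using npvars_npassoc[of f1 f2 f3] f1(1) f2(1) f3(1) by blast
  ultimately have "Alt3_identity (npassoc f1 f2 f3)"
    using free by blast
  moreover have "\<not> Alt3_identity (npassoc f1 f2 f3)"
    using subset_trans[OF f1(1) G] subset_trans[OF f2(1) G] subset_trans[OF f3(1) G]
      f1(2) f2(2) f3(2)
    by (rule npassoc_not_Alt3_identity)
  ultimately show False
    by contradiction
qed

end
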